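(* For every $\eta,\varepsilon\in(0,1/3]$ (and $d\in\mathbb{N}$) there is $N=N(\eta,\varepsilon)\in\mathbb{N}$ such that for infinitely many $m\in\mathbb{N}$ the following holds: there exists a set $B\subset\{-m,\dots,m-1\}^d$ with $|B|\le\eta m^d$ such that $$\bigl|(A+B)\cap[m]^d\bigr|\ge(1-\varepsilon)m^d\quad\text{for all }A\subset[m]^d\text{ with }|A|\ge N,$$ where sums are taken in $\mathbb{Z}^d$.
   Context: $[m]=\{0,1,\dots,m-1\}$; $|\cdot|$ denotes cardinality. *)

theory Defs
  imports "HOL-Analysis.Analysis"
begin

text \<open>Points of Z^d are vectors int^'d, with d = CARD('d) (so d >= 1).\<close>

definition grid :: "nat \<Rightarrow> (int ^ 'd) set" where
  "grid m = {x. \<forall>i. 0 \<le> x $ i \<and> x $ i < int m}"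

definition sym_grid :: "nat \<Rightarrow> (int ^ 'd) set" where
  "sym_grid m = {x. \<forall>i. - int m \<le> x $ i \<and> x $ i < int m}"

definition sumset :: "(int ^ 'd) set \<Rightarrow> (int ^ 'd) set \<Rightarrow> (int ^ 'd) set" where
  "sumset A B = {a + b | a b. a \<in> A \<and> b \<in> B}"

end

theory Submission
  imports Defs "HOL-Real_Asymp.Real_Asymp"
begin

(* Let n = m^d, take c >= 1/\<epsilon>, k >= 1/\<eta>, t = n/(c N^2) and s = n/k, and let M = 2^d n be the
   size of the box {-m..m-1}^d. Call a set B of s points of the box bad if some A of size N leaves
   more than t N^2 = n/c points of [m]^d outside A + B. Each uncovered x clashes (x - a = y - a')
   with at most N^2 points y, so greedily the uncovered points contain t points U whose differences
   U - A are pairwise distinct, and a bad B avoids all t N of them. Hence there are at most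
   C(n,N) C(n,t) C(M - tN, s) bad sets. Since C(M - tN, s) <= C(M,s) exp(-tNs/M), this is below
   C(M,s) once N ln n < t (N/(k 2^d) - ln(e c N^2)), which holds for all large n if N is large. *)

lemma bij_betw_vec_lambda_box:
  "bij_betw vec_lambda (UNIV \<rightarrow>\<^sub>E I) {x :: 'a ^ 'd. \<forall>i. x $ i \<in> I}"
  by (rule bij_betwI[where g = vec_nth]) (auto simp: vec_lambda_inverse)

lemma
  assumes "finite I"
  shows finite_vec_box: "finite {x :: 'a ^ 'd. \<forall>i. x $ i \<in> I}"
    and card_vec_box: "card {x :: 'a ^ 'd. \<forall>i. x $ i \<in> I} = card I ^ CARD('d)"
proof -
  note bij = bij_betw_vec_lambda_box[of I, where 'd = 'd]
  show "finite {x :: 'a ^ 'd. \<forall>i. x $ i \<in> I}"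
    using bij_betw_finite[OF bij] assms by (simp add: finite_PiE)
  show "card {x :: 'a ^ 'd. \<forall>i. x $ i \<in> I} = card I ^ CARD('d)"
    using bij_betw_same_card[OF bij] assms by (simp add: card_PiE)
qed

lemma grid_eq_box: "grid m = {x. \<forall>i. x $ i \<in> {0..<int m}}"
  by (auto simp: grid_def)

lemma sym_grid_eq_box: "sym_grid m = {x. \<forall>i. x $ i \<in> {- int m..<int m}}"
  by (auto simp: sym_grid_def)

lemma finite_grid: "finite (grid m)"
  unfolding grid_eq_box by (rule finite_vec_box) simp

lemma card_grid: "card (grid m :: (int ^ 'd) set) = m ^ CARD('d)"
  unfolding grid_eq_box by (subst card_vec_box) simp_all

lemma finite_sym_grid: "finite (sym_grid m)"
  unfolding sym_grid_eq_box by (rule finite_vec_box) simp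

lemma card_sym_grid: "card (sym_grid m :: (int ^ 'd) set) = 2 ^ CARD('d) * m ^ CARD('d)"
  unfolding sym_grid_eq_box by (subst card_vec_box) (simp_all add: nat_mult_distrib power_mult_distrib)

lemma diff_grid_in_sym_grid: "x \<in> grid m \<Longrightarrow> y \<in> grid m \<Longrightarrow> x - y \<in> sym_grid m"
  unfolding grid_def sym_grid_def by (auto simp: less_imp_le) (smt (verit))+

lemma sumset_eq_set_plus: "sumset A B = A + B"
  by (auto simp: sumset_def set_plus_def)

lemma pow_div_fact_le_exp:
  fixes x :: real
  assumes "0 \<le> x"
  shows "x ^ k / fact k \<le> exp x"
proof -
  have exp_sums: "(\<lambda>n. x ^ n / fact n) sums exp x"
    using exp_converges[of x] by (simp add: field_simps)
  have "(\<Sum>n\<in>{k}. x ^ n / fact n) \<le> (\<Sum>n. x ^ n / fact n)"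
    by (rule sum_le_suminf) (use exp_sums assms in \<open>auto simp: sums_iff\<close>)
  with exp_sums show ?thesis by (simp add: sums_iff)
qed

lemma choose_le_exp_pow:
  assumes "0 < k"
  shows "real (n choose k) \<le> (exp 1 * real n / real k) ^ k"
proof -
  have choose_fact: "real (n choose k) * fact k \<le> real n ^ k"
    using binomial_fact_pow[of n k] by (metis of_nat_fact of_nat_le_iff of_nat_mult of_nat_power)
  have pow_le: "real k ^ k \<le> exp (real k) * fact k"
    using pow_div_fact_le_exp[of "real k" k] by (simp add: divide_le_eq)
  have "real (n choose k) * real k ^ k \<le> real (n choose k) * (exp (real k) * fact k)"
    by (rule mult_left_mono[OF pow_le]) simp
  also have "\<dots> = exp (real k) * (real (n choose k) * fact k)"
    by (simp only: ac_simps)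
  also have "\<dots> \<le> exp (real k) * real n ^ k"
    by (rule mult_left_mono[OF choose_fact]) simp
  also have "\<dots> = (exp 1 * real n / real k) ^ k * real k ^ k"
    using assms exp_of_nat_mult[of k "1 :: real"] by (simp add: power_mult_distrib power_divide)
  finally show ?thesis
    using assms by simp
qed

lemma choose_diff_mult_pow_le:
  assumes "r \<le> M"
  shows "real ((M - r) choose s) * real M ^ s \<le> real (M choose s) * real (M - r) ^ s"
proof (cases "s \<le> M - r")
  case True
  have falling: "real (n choose s) * fact s = (\<Prod>i<s. real n - real i)" for n
    by (simp add: binomial_gbinomial gbinomial_mult_fact' atLeast0LessThan)
  have "real ((M - r) choose s) * real M ^ s * fact s = (\<Prod>i<s. (real (M - r) - real i) * real M)"
    by (simp add: falling prod.distrib)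
  also have "\<dots> \<le> (\<Prod>i<s. (real M - real i) * real (M - r))"
  proof (rule prod_mono)
    fix i assume "i \<in> {..<s}"
    then have "i + r \<le> M" using True assms by auto
    then have "real i + real r \<le> real M" by (metis of_nat_add of_nat_le_iff)
    then have "real M * (real i + real r) \<le> real M * real M" by (intro mult_left_mono) auto
    then show "0 \<le> (real (M - r) - real i) * real M \<and>
          (real (M - r) - real i) * real M \<le> (real M - real i) * real (M - r)"
      using assms by (simp add: of_nat_diff algebra_simps)
  qed
  also have "\<dots> = real (M choose s) * real (M - r) ^ s * fact s"
    by (simp add: falling prod.distrib)
  finally show ?thesis by simp
qed (simp add: binomial_eq_0)

lemma choose_diff_le_exp:
  assumes "r \<le> M"
  shows "real ((M - r) choose s) \<le> real (M choose s) * exp (- (real r * real s / real M))"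
proof (cases "M = 0")
  case False
  have ratio: "real (M - r) / real M \<le> exp (- (real r / real M))"
    using exp_ge_add_one_self[of "- (real r / real M)"] assms False
    by (simp add: of_nat_diff diff_divide_distrib)
  have "real ((M - r) choose s) \<le> real (M choose s) * (real (M - r) / real M) ^ s"
    using choose_diff_mult_pow_le[OF assms, of s] False by (simp add: power_divide field_simps)
  also have "\<dots> \<le> real (M choose s) * exp (- (real r / real M)) ^ s"
    by (intro mult_left_mono power_mono ratio) auto
  also have "\<dots> = real (M choose s) * exp (- (real r * real s / real M))"
    by (simp add: exp_of_nat_mult[symmetric] field_simps)
  finally show ?thesis .
qed (use assms in simp)

lemma independent_subset_bounded_degree:
  fixes R :: "'a \<Rightarrow> 'a \<Rightarrow> bool"
  assumes "finite U" and R_sym: "\<And>x y. R x y \<Longrightarrow> R y x" and R_refl: "\<And>x. R x x"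
    and degree: "\<And>x. x \<in> U \<Longrightarrow> card {y \<in> U. R x y} \<le> K"
  obtains I where "I \<subseteq> U" "card U \<le> K * card I" "\<And>x y. x \<in> I \<Longrightarrow> y \<in> I \<Longrightarrow> R x y \<Longrightarrow> x = y"
proof -
  have "\<exists>I\<subseteq>U. card U \<le> K * card I \<and> (\<forall>x\<in>I. \<forall>y\<in>I. R x y \<longrightarrow> x = y)"
    using assms(1) degree
  proof (induction U rule: finite_psubset_induct)
    case (psubset U)
    show ?case
    proof (cases "U = {}")
      case False
      then obtain x where x: "x \<in> U" by auto
      define V where "V = {y \<in> U. R x y}"
      have "x \<in> V" using x R_refl unfolding V_def by simp
      then have smaller: "U - V \<subset> U" unfolding V_def by blast
      have "card {y \<in> U - V. R z y} \<le> K" if "z \<in> U - V" for z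
      proof -
        have "card {y \<in> U - V. R z y} \<le> card {y \<in> U. R z y}"
          by (rule card_mono) (use psubset.hyps in auto)
        also have "\<dots> \<le> K" using psubset.prems that by blast
        finally show ?thesis .
      qed
      then obtain I where I: "I \<subseteq> U - V" "card (U - V) \<le> K * card I"
        "\<forall>x\<in>I. \<forall>y\<in>I. R x y \<longrightarrow> x = y"
        using psubset.IH[OF smaller] by blast
      have "finite I" using I(1) psubset.hyps finite_subset by blast
      have "x \<notin> I" using I(1) \<open>x \<in> V\<close> by blast
      have "card V \<le> K" unfolding V_def using psubset.prems[OF x] .
      have "card U = card (U - V) + card V"
        using card_Diff_subset[of V U] card_mono[of U V] psubset.hyps unfolding V_def
        by (simp add: finite_subset)
      also have "\<dots> \<le> K * card (insert x I)"
        using I(2) \<open>card V \<le> K\<close> \<open>x \<notin> I\<close> \<open>finite I\<close> by simp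
      finally show ?thesis
        using I x R_sym unfolding V_def by (intro exI[of _ "insert x I"]) blast
    qed simp
  qed
  then show ?thesis using that by blast
qed

lemma obtain_subset_inj_on_diff:
  fixes A U :: "'a :: ab_group_add set"
  assumes "finite A" "A \<noteq> {}" "finite U" "t * card A ^ 2 \<le> card U"
  obtains U' where "U' \<subseteq> U" "card U' = t" "inj_on (\<lambda>(x, a). x - a) (U' \<times> A)"
proof -
  \<comment> \<open>Distinct points of an R-independent set have disjoint difference sets x - A.\<close>
  define R where "R x y \<longleftrightarrow> (\<exists>a\<in>A. \<exists>a'\<in>A. x - a = y - a')" for x y
  have degree: "card {y \<in> U. R x y} \<le> card A ^ 2" for x
  proof -
    have "{y \<in> U. R x y} \<subseteq> (\<lambda>(a, a'). x - a + a') ` (A \<times> A)"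
      unfolding R_def by (force simp: algebra_simps)
    then have "card {y \<in> U. R x y} \<le> card (A \<times> A)"
      using assms(1) by (meson card_image_le card_mono finite_SigmaI finite_imageI le_trans)
    then show ?thesis by (simp add: card_cartesian_product power2_eq_square)
  qed
  have R_sym: "R x y \<Longrightarrow> R y x" for x y unfolding R_def by metis
  have R_refl: "R x x" for x unfolding R_def using assms(2) by blast
  obtain I where I: "I \<subseteq> U" "card U \<le> card A ^ 2 * card I"
    "\<And>x y. x \<in> I \<Longrightarrow> y \<in> I \<Longrightarrow> R x y \<Longrightarrow> x = y"
    using independent_subset_bounded_degree[OF assms(3) R_sym R_refl degree] by blast
  have "t * card A ^ 2 \<le> card I * card A ^ 2"
    using le_trans[OF assms(4) I(2)] by (simp add: mult.commute)
  moreover have "0 < card A ^ 2" using assms(1,2) by (simp add: card_gt_0_iff)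
  ultimately have "t \<le> card I" by simp
  then obtain U' where U': "U' \<subseteq> I" "card U' = t" by (meson obtain_subset_with_card_n)
  have "inj_on (\<lambda>(x, a). x - a) (U' \<times> A)"
    using I(3) U'(1) unfolding R_def by (fastforce intro: inj_onI)
  with U' I(1) that show ?thesis by blast
qed

lemma sparse_sumset_avoids_differences:
  fixes A B G :: "'a :: ab_group_add set"
  assumes "finite G" "A \<subseteq> G" "N \<le> card A" "0 < N" "t * N ^ 2 < card (G - (A + B))"
  obtains A' U where "A' \<subseteq> G" "card A' = N" "U \<subseteq> G" "card U = t"
    "inj_on (\<lambda>(x, a). x - a) (U \<times> A')" "B \<inter> (\<lambda>(x, a). x - a) ` (U \<times> A') = {}"
proof -
  obtain A' where A': "A' \<subseteq> A" "card A' = N"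
    using assms(3) by (meson obtain_subset_with_card_n)
  then have "finite A'" "A' \<noteq> {}" using assms(4) card_ge_0_finite by auto
  have "G - (A + B) \<subseteq> G - (A' + B)" using A'(1) by (auto simp: set_plus_def)
  then have "t * card A' ^ 2 \<le> card (G - (A' + B))"
    using assms(1,5) A'(2) card_mono[of "G - (A' + B)" "G - (A + B)"] by simp
  moreover have "finite (G - (A' + B))" using assms(1) by simp
  ultimately obtain U where U: "U \<subseteq> G - (A' + B)" "card U = t" "inj_on (\<lambda>(x, a). x - a) (U \<times> A')"
    using obtain_subset_inj_on_diff[OF \<open>finite A'\<close> \<open>A' \<noteq> {}\<close>] by blast
  have "x - a \<notin> B" if "x \<in> U" "a \<in> A'" for x a
  proof
    assume "x - a \<in> B"
    then have "x \<in> A' + B"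
      using set_plus_intro[OF \<open>a \<in> A'\<close>] by (metis add.commute diff_add_cancel)
    with U(1) \<open>x \<in> U\<close> show False by blast
  qed
  then have "B \<inter> (\<lambda>(x, a). x - a) ` (U \<times> A') = {}" by auto
  with that U A' assms(2) show ?thesis by blast
qed

lemma card_sets_with_sparse_sumset_le:
  fixes G S :: "'a :: ab_group_add set"
  assumes "finite G" "finite S" "\<And>x y. x \<in> G \<Longrightarrow> y \<in> G \<Longrightarrow> x - y \<in> S" "0 < N"
  shows "card {B. B \<subseteq> S \<and> card B = s \<and> (\<exists>A\<subseteq>G. N \<le> card A \<and> t * N ^ 2 < card (G - (A + B)))}
    \<le> (card G choose N) * (card G choose t) * ((card S - t * N) choose s)"
    (is "card ?bad \<le> _")
proof -
  define D :: "'a set \<times> 'a set \<Rightarrow> 'a set" where "D = (\<lambda>(A, U). (\<lambda>(x, a). x - a) ` (U \<times> A))"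
  define P where "P = {(A, U). A \<subseteq> G \<and> card A = N \<and> U \<subseteq> G \<and> card U = t \<and>
    inj_on (\<lambda>(x, a). x - a) (U \<times> A)}"
  define avoiding where "avoiding p = {B. B \<subseteq> S - D p \<and> card B = s}" for p
  have P_subset: "P \<subseteq> {A. A \<subseteq> G \<and> card A = N} \<times> {U. U \<subseteq> G \<and> card U = t}"
    unfolding P_def by auto
  then have "finite P" by (rule finite_subset) (use assms(1) in auto)
  have card_P: "card P \<le> (card G choose N) * (card G choose t)"
    using card_mono[OF _ P_subset] assms(1) by (simp add: card_cartesian_product n_subsets)
  have card_avoiding: "card (avoiding p) = (card S - t * N) choose s" if "p \<in> P" for p
  proof -
    obtain A U where p: "p = (A, U)" "A \<subseteq> G" "card A = N" "U \<subseteq> G" "card U = t"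
      "inj_on (\<lambda>(x, a). x - a) (U \<times> A)"
      using \<open>p \<in> P\<close> unfolding P_def by auto
    have "D p \<subseteq> S" using p(1,2,4) assms(3) unfolding D_def by auto
    moreover have "card (D p) = t * N"
      using p unfolding D_def by (simp add: card_image card_cartesian_product)
    ultimately have "card (S - D p) = card S - t * N"
      using assms(2) by (simp add: card_Diff_subset finite_subset)
    then show ?thesis unfolding avoiding_def using assms(2) by (simp add: n_subsets)
  qed
  have "?bad \<subseteq> (\<Union>p\<in>P. avoiding p)"
  proof
    fix B assume "B \<in> ?bad"
    then obtain A where B: "B \<subseteq> S" "card B = s"
      and A: "A \<subseteq> G" "N \<le> card A" "t * N ^ 2 < card (G - (A + B))"
      by blast
    obtain A' U where A'U: "A' \<subseteq> G" "card A' = N" "U \<subseteq> G" "card U = t"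
      "inj_on (\<lambda>(x, a). x - a) (U \<times> A')" "B \<inter> (\<lambda>(x, a). x - a) ` (U \<times> A') = {}"
      using sparse_sumset_avoids_differences[OF assms(1) A(1,2) assms(4) A(3)] by blast
    then have "(A', U) \<in> P" unfolding P_def by blast
    moreover have "B \<in> avoiding (A', U)" using A'U(6) B unfolding avoiding_def D_def by auto
    ultimately show "B \<in> (\<Union>p\<in>P. avoiding p)" by blast
  qed
  moreover have "finite (\<Union>p\<in>P. avoiding p)"
    by (rule finite_subset[of _ "Pow S"]) (use assms(2) in \<open>auto simp: avoiding_def\<close>)
  ultimately have "card ?bad \<le> card (\<Union>p\<in>P. avoiding p)"
    by (rule card_mono[rotated])
  also have "\<dots> \<le> (\<Sum>p\<in>P. card (avoiding p))"
    using \<open>finite P\<close> by (rule card_UN_le)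
  also have "\<dots> = card P * ((card S - t * N) choose s)"
    using card_avoiding by simp
  also have "\<dots> \<le> (card G choose N) * (card G choose t) * ((card S - t * N) choose s)"
    using card_P by simp
  finally show ?thesis .
qed

lemma exists_set_with_dense_sumsets:
  fixes G S :: "'a :: ab_group_add set"
  assumes "finite G" "finite S" "\<And>x y. x \<in> G \<Longrightarrow> y \<in> G \<Longrightarrow> x - y \<in> S" "0 < N"
    and "(card G choose N) * (card G choose t) * ((card S - t * N) choose s) < card S choose s"
  obtains B where "B \<subseteq> S" "card B = s"
    "\<And>A. A \<subseteq> G \<Longrightarrow> N \<le> card A \<Longrightarrow> card (G - (A + B)) \<le> t * N ^ 2"
proof -
  let ?bad = "{B. B \<subseteq> S \<and> card B = s \<and> (\<exists>A\<subseteq>G. N \<le> card A \<and> t * N ^ 2 < card (G - (A + B)))}"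
  have "card ?bad < card {B. B \<subseteq> S \<and> card B = s}"
    using card_sets_with_sparse_sumset_le[OF assms(1-4), of s t] assms(5)
    by (simp add: n_subsets assms(2))
  moreover have "finite ?bad" by (rule finite_subset[of _ "Pow S"]) (use assms(2) in auto)
  ultimately have "\<not> {B. B \<subseteq> S \<and> card B = s} \<subseteq> ?bad"
    using card_mono by (meson not_le)
  then obtain B where B: "B \<subseteq> S" "card B = s" "B \<notin> ?bad" by blast
  show ?thesis
  proof (rule that[OF B(1,2)])
    fix A assume "A \<subseteq> G" "N \<le> card A"
    then show "card (G - (A + B)) \<le> t * N ^ 2" using B by (auto simp: not_less)
  qed
qed

lemma choose_product_lt_choose:
  fixes n M N t s :: nat
  assumes "0 < n" "0 < t" "t * N \<le> M" "s \<le> M"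
    and exponent: "real N * ln n + real t * (ln (exp 1 * n / t) - real N * s / M) < 0"
  shows "(n choose N) * (n choose t) * ((M - t * N) choose s) < M choose s"
proof -
  have "n choose N \<le> n ^ N"
    by (cases "N \<le> n") (simp_all add: binomial_le_pow binomial_eq_0)
  then have C1: "real (n choose N) \<le> exp (real N * ln n)"
    using assms(1) by (simp add: exp_of_nat_mult flip: of_nat_power)
  have C2: "real (n choose t) \<le> exp (real t * ln (exp 1 * n / t))"
    using choose_le_exp_pow[OF assms(2), of n] assms(1,2) by (simp add: exp_of_nat_mult)
  have C3: "real ((M - t * N) choose s) \<le> real (M choose s) * exp (- (real t * real N * s / M))"
    using choose_diff_le_exp[OF assms(3), of s] by simp
  have "real ((n choose N) * (n choose t) * ((M - t * N) choose s))
      \<le> exp (real N * ln n) * exp (real t * ln (exp 1 * n / t)) *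
        (real (M choose s) * exp (- (real t * real N * s / M)))"
    unfolding of_nat_mult by (intro mult_mono C1 C2 C3) auto
  also have "\<dots> = real (M choose s) * exp (real N * ln n + real t * (ln (exp 1 * n / t) - real N * s / M))"
    by (simp add: exp_add exp_diff exp_minus divide_inverse algebra_simps)
  also have "\<dots> < real (M choose s)"
    using exponent assms(4) by simp
  finally show ?thesis by (simp only: of_nat_less_iff)
qed

lemma sym_grid_subset_with_small_uncovered_part:
  fixes m N c k t s :: nat
  defines "n \<equiv> m ^ CARD('d)"
  assumes "0 < N" "0 < n" "n = c * N ^ 2 * t" "n = k * s"
    and large: "real N * ln n < n * ((N / (k * 2 ^ CARD('d)) - ln (exp 1 * c * real N ^ 2)) / (c * real N ^ 2))"
  obtains B :: "(int ^ 'd) set" where "B \<subseteq> sym_grid m" "card B = s"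
    "\<And>A. A \<subseteq> grid m \<Longrightarrow> N \<le> card A \<Longrightarrow> card (grid m - sumset A B) \<le> t * N ^ 2"
proof -
  define M where "M = 2 ^ CARD('d) * n"
  have "0 < t" "0 < c" using assms(3,4) by auto
  have "0 < k" using assms(3,5) by (metis gr0I mult_0)
  have "t * N \<le> M" using assms(2,4) \<open>0 < c\<close> by (simp add: M_def power2_eq_square)
  have "s \<le> M" using assms(5) \<open>0 < k\<close> by (simp add: M_def)
  have "real N * ln n + real t * (ln (exp 1 * n / t) - real N * s / M) < 0"
  proof -
    have "exp 1 * n / t = exp 1 * c * real N ^ 2" using assms(4) \<open>0 < t\<close> by (simp add: field_simps)
    moreover have "real N * s / M = N / (k * 2 ^ CARD('d))"
      using assms(3,5) by (simp add: M_def field_simps)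
    moreover have "real t * (ln (exp 1 * c * real N ^ 2) - N / (k * 2 ^ CARD('d))) =
        - (n * ((N / (k * 2 ^ CARD('d)) - ln (exp 1 * c * real N ^ 2)) / (c * real N ^ 2)))"
      using assms(2,4) \<open>0 < c\<close> by (simp add: field_simps)
    ultimately show ?thesis using large by simp
  qed
  with \<open>0 < n\<close> \<open>0 < t\<close> \<open>t * N \<le> M\<close> \<open>s \<le> M\<close>
  have "(n choose N) * (n choose t) * ((M - t * N) choose s) < M choose s"
    by (rule choose_product_lt_choose)
  then show ?thesis
    using exists_set_with_dense_sumsets[OF finite_grid finite_sym_grid diff_grid_in_sym_grid assms(2)]
      that unfolding sumset_eq_set_plus by (metis card_grid card_sym_grid M_def n_def)
qed

lemma dense_sumsets_in_grid:
  fixes m N c k :: nat and \<eta> \<epsilon> :: real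
  assumes "0 < N" "0 < m" "c * N ^ 2 * k dvd m" "1 / c \<le> \<epsilon>" "1 / k \<le> \<eta>"
    and large: "real N * ln (real m ^ CARD('d)) <
      real m ^ CARD('d) * ((N / (k * 2 ^ CARD('d)) - ln (exp 1 * c * real N ^ 2)) / (c * real N ^ 2))"
  shows "\<exists>B :: (int ^ 'd) set. B \<subseteq> sym_grid m \<and>
           real (card B) \<le> \<eta> * real m ^ CARD('d) \<and>
           (\<forall>A. A \<subseteq> grid m \<and> card A \<ge> N \<longrightarrow>
              real (card (sumset A B \<inter> grid m)) \<ge> (1 - \<epsilon>) * real m ^ CARD('d))"
proof -
  define n where "n = m ^ CARD('d)"
  have "0 < n" using assms(2) by (simp add: n_def)
  have "m dvd n" by (simp add: n_def)
  with assms(3) have "c * N ^ 2 dvd n" "k dvd n" by (meson dvd_mult_left dvd_mult_right dvd_trans)+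
  then obtain t s where t: "n = c * N ^ 2 * t" and s: "n = k * s" by (meson dvdE)
  have "0 < c" using t \<open>0 < n\<close> by auto
  have "0 < k" using s \<open>0 < n\<close> by (metis gr0I mult_0)
  obtain B :: "(int ^ 'd) set" where B: "B \<subseteq> sym_grid m" "card B = s"
    "\<And>A. A \<subseteq> grid m \<Longrightarrow> N \<le> card A \<Longrightarrow> card (grid m - sumset A B) \<le> t * N ^ 2"
  proof -
    have "real N * ln n < n * ((N / (k * 2 ^ CARD('d)) - ln (exp 1 * c * real N ^ 2)) / (c * real N ^ 2))"
      using large by (simp add: n_def)
    then show ?thesis
      using sym_grid_subset_with_small_uncovered_part \<open>0 < n\<close> t s that assms(1) unfolding n_def by blast
  qed
  have "(1 - \<epsilon>) * n \<le> card (sumset A B \<inter> grid m)" if "A \<subseteq> grid m" "N \<le> card A" for A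
  proof -
    have "real n = card (sumset A B \<inter> grid m) + card (grid m - sumset A B)"
      using card_Int_Diff[OF finite_grid, of m "sumset A B"] by (simp add: n_def card_grid Int_commute)
    moreover have "real (card (grid m - sumset A B)) \<le> real t * N ^ 2"
      using B(3)[OF that] by (metis of_nat_le_iff of_nat_mult of_nat_power)
    moreover have "real t * N ^ 2 = n / c" using t \<open>0 < c\<close> by (simp add: field_simps)
    moreover have "n / c \<le> \<epsilon> * n" using mult_right_mono[OF assms(4), of "real n"] by simp
    ultimately show ?thesis by (simp add: algebra_simps)
  qed
  moreover have "real (card B) \<le> \<eta> * n"
    using B(2) s \<open>0 < k\<close> mult_right_mono[OF assms(5), of "real n"] by simp
  ultimately show ?thesis using B(1) by (auto simp: n_def)
qed

lemma eventually_dense_sumsets_in_grid: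
  fixes N c k :: nat and \<eta> \<epsilon> :: real
  assumes "0 < N" "0 < c" "1 / c \<le> \<epsilon>" "1 / k \<le> \<eta>"
    and gap: "ln (exp 1 * c * real N ^ 2) < N / (k * 2 ^ CARD('d))"
  shows "\<forall>\<^sub>F m in sequentially. c * N ^ 2 * k dvd m \<longrightarrow>
    (\<exists>B :: (int ^ 'd) set. B \<subseteq> sym_grid m \<and>
       real (card B) \<le> \<eta> * real m ^ CARD('d) \<and>
       (\<forall>A. A \<subseteq> grid m \<and> card A \<ge> N \<longrightarrow>
          real (card (sumset A B \<inter> grid m)) \<ge> (1 - \<epsilon>) * real m ^ CARD('d)))"
proof -
  define \<delta> where "\<delta> = (N / (k * 2 ^ CARD('d)) - ln (exp 1 * c * real N ^ 2)) / (c * real N ^ 2)"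
  have "0 < \<delta>" using gap assms(1,2) by (simp add: \<delta>_def)
  then have "\<forall>\<^sub>F y in at_top. real N * ln y < y * \<delta>" by real_asymp
  moreover have "filterlim (\<lambda>m. real m ^ CARD('d)) at_top sequentially"
    by (intro filterlim_pow_at_top filterlim_real_sequentially) simp
  ultimately have "\<forall>\<^sub>F m in sequentially. real N * ln (real m ^ CARD('d)) < real m ^ CARD('d) * \<delta>"
    by (rule eventually_compose_filterlim)
  then show ?thesis
    using eventually_gt_at_top[of 0]
    by eventually_elim (use dense_sumsets_in_grid[OF assms(1) _ _ assms(3,4)] in \<open>auto simp: \<delta>_def\<close>)
qed

lemma ex_nat_ln_square_less_linear:
  fixes c K :: real
  assumes "0 < c" "0 < K"
  obtains N :: nat where "0 < N" "ln (exp 1 * c * real N ^ 2) < N / K"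
proof -
  have "\<forall>\<^sub>F x in at_top. ln (exp 1 * c * x ^ 2) < x / K"
    using assms by real_asymp
  then have "\<forall>\<^sub>F N in sequentially. ln (exp 1 * c * real N ^ 2) < N / K"
    by (rule eventually_compose_filterlim[OF _ filterlim_real_sequentially])
  then show ?thesis
    using that eventually_happens'[OF sequentially_bot eventually_conj[OF eventually_gt_at_top]] by blast
qed

lemma frequently_dvd_sequentially:
  fixes L :: nat
  assumes "0 < L"
  shows "\<exists>\<^sub>F m in sequentially. L dvd m"
  unfolding frequently_sequentially
proof
  fix n
  show "\<exists>m\<ge>n. L dvd m"
    using assms by (intro exI[of _ "L * n"]) simp
qed

theorem corollary4p5:
  fixes \<eta> \<epsilon> :: real
  assumes "0 < \<eta>" "\<eta> \<le> 1/3" "0 < \<epsilon>" "\<epsilon> \<le> 1/3"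
  shows "\<exists>N::nat. infinite {m::nat. \<exists>B :: (int ^ 'd) set. B \<subseteq> sym_grid m \<and>
           real (card B) \<le> \<eta> * real m ^ CARD('d) \<and>
           (\<forall>A. A \<subseteq> grid m \<and> card A \<ge> N \<longrightarrow>
              real (card (sumset A B \<inter> grid m)) \<ge> (1 - \<epsilon>) * real m ^ CARD('d))}"
proof -
  obtain c :: nat where "0 < c" "1 / c < \<epsilon>"
    using ex_inverse_of_nat_less[OF assms(3)] by (auto simp: inverse_eq_divide)
  obtain k :: nat where "0 < k" "1 / k < \<eta>"
    using ex_inverse_of_nat_less[OF assms(1)] by (auto simp: inverse_eq_divide)
  obtain N :: nat where N: "0 < N" "ln (exp 1 * c * real N ^ 2) < N / (k * 2 ^ CARD('d))"
    using ex_nat_ln_square_less_linear[of c "k * 2 ^ CARD('d)"] \<open>0 < c\<close> \<open>0 < k\<close> by auto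
  note dense = eventually_dense_sumsets_in_grid[OF N(1) \<open>0 < c\<close>
    less_imp_le[OF \<open>1 / c < \<epsilon>\<close>] less_imp_le[OF \<open>1 / k < \<eta>\<close>] N(2)]
  have "0 < c * N ^ 2 * k" using \<open>0 < c\<close> \<open>0 < k\<close> N(1) by simp
  then show ?thesis
    unfolding frequently_cofinite[symmetric] cofinite_eq_sequentially
    by (intro exI[of _ N] frequently_mp[OF dense frequently_dvd_sequentially])
qed

end
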